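(* Let $q > 5$ be a Sophie Germain prime, let $p = 2q+1$, and suppose $z(p) \mid \pi(q)$. Then $\pi(q)/z(p)$ is an odd integer.
   Context: A Sophie Germain prime is a prime $q$ with $2q+1$ prime. $F_n$ denotes the $n$-th Fibonacci number ($F_0=0$, $F_1=1$). For a prime $p$, $z(p)$ is the least positive integer $k$ with $p \mid F_k$. $\pi(n)$ is the Pisano period, the least period of $(F_m \bmod n)_{m\ge0}$. *)

theory Defs
  imports "HOL-Number_Theory.Number_Theory"
begin

definition fib_rank :: "nat \<Rightarrow> nat" where
  "fib_rank p = (LEAST k. 0 < k \<and> p dvd fib k)"

definition pisano :: "nat \<Rightarrow> nat" where
  "pisano n = (LEAST k. 0 < k \<and> (\<forall>m. fib (m + k) mod n = fib m mod n))"

end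

theory Submission
  imports Defs
begin

(*
  For a prime r other than 2 and 5, expanding (1 + sqrt 5)^r modulo r gives
  F_r = (5/r) and 2 F_(r+1) = 1 + (5/r) (mod r).  Hence pi(r) divides r - 1 when
  r = +-1 (mod 5), while r divides F_(r+1) and pi(r) divides 2(r + 1) when r = +-2 (mod 5).

  If q = +-1 (mod 5), then z(p) divides pi(q), hence q - 1, and also p + 1 or p - 1;
  so z(p) divides 4, which is impossible.  As q = 2 (mod 5) would give 5 | p, we have
  q = 3 and p = 2 (mod 5), so pi(q) divides 2(q + 1).  Finally p = 3 (mod 4), so -1 is
  not a square mod p, and F_p = F_(q+1)^2 + F_q^2 = -1 (mod p) forces z(p) not to
  divide q + 1.  Thus pi(q)/z(p) is odd.
*)

lemma sum_choose_Suc: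
  fixes f :: "nat \<Rightarrow> 'a::comm_semiring_1"
  shows "(\<Sum>k\<le>Suc n. of_nat (Suc n choose k) * f k)
       = (\<Sum>k\<le>n. of_nat (n choose k) * (f k + f (Suc k)))"
proof -
  have tail: "(\<Sum>k\<le>n. of_nat (n choose Suc k) * f (Suc k))
            = (\<Sum>k<n. of_nat (n choose Suc k) * f (Suc k))"
    by (simp add: binomial_eq_0 flip: lessThan_Suc_atMost)
  have shift: "f 0 + (\<Sum>k<n. of_nat (n choose Suc k) * f (Suc k))
             = (\<Sum>k\<le>n. of_nat (n choose k) * f k)"
    by (simp only: sum.atMost_shift[of "\<lambda>k. of_nat (n choose k) * f k"]) simp
  have "(\<Sum>k\<le>Suc n. of_nat (Suc n choose k) * f k)
      = f 0 + (\<Sum>k\<le>n. of_nat (n choose Suc k) * f (Suc k))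
          + (\<Sum>k\<le>n. of_nat (n choose k) * f (Suc k))"
    unfolding sum.atMost_Suc_shift by (simp add: sum.distrib algebra_simps)
  then show ?thesis
    by (simp only: tail shift) (simp add: sum.distrib algebra_simps)
qed

lemma sum_choose_prime_cong:
  assumes "prime r"
  shows "[(\<Sum>k\<le>r. (r choose k) * f k) = f 0 + f r] (mod r)"
proof -
  obtain m where m: "r = Suc m" using assms prime_gt_0_nat gr0_conv_Suc by blast
  have "(\<Sum>k\<le>r. (r choose k) * f k) = f 0 + (\<Sum>k<m. (r choose Suc k) * f (Suc k)) + f r"
    unfolding sum.atMost_shift by (simp add: m)
  moreover have "[(\<Sum>k<m. (r choose Suc k) * f (Suc k)) = 0] (mod r)"
    unfolding cong_0_iff
  proof (intro dvd_sum dvd_mult2)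
    show "r dvd (r choose Suc k)" if "k \<in> {..<m}" for k
      using that m by (intro dvd_choose_prime assms) auto
  qed
  ultimately show ?thesis
    using cong_add[OF cong_add[OF cong_refl] cong_refl] by fastforce
qed

(* (1 + sqrt 5)^n = binom5_even n + binom5_odd n * sqrt 5 by the binomial theorem. *)

definition binom5_even :: "nat \<Rightarrow> nat" where
  "binom5_even n = (\<Sum>k\<le>n. (n choose k) * (if even k then 5 ^ (k div 2) else 0))"

definition binom5_odd :: "nat \<Rightarrow> nat" where
  "binom5_odd n = (\<Sum>k\<le>n. (n choose k) * (if odd k then 5 ^ (k div 2) else 0))"

lemma binom5_Suc:
  "binom5_even (Suc n) = binom5_even n + 5 * binom5_odd n"
  "binom5_odd (Suc n) = binom5_odd n + binom5_even n"
proof -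
  have pascal: "(\<Sum>k\<le>Suc n. (Suc n choose k) * f k)
                = (\<Sum>k\<le>n. (n choose k) * (f k + f (Suc k)))" for f :: "nat \<Rightarrow> nat"
    using sum_choose_Suc[of n f] by simp
  have "(if even (Suc k) then 5 ^ (Suc k div 2) else 0)
          = 5 * (if odd k then 5 ^ (k div 2) else 0 :: nat)"
    "(if odd (Suc k) then 5 ^ (Suc k div 2) else 0)
          = (if even k then 5 ^ (k div 2) else 0 :: nat)" for k
    by (auto elim: oddE)
  then show "binom5_even (Suc n) = binom5_even n + 5 * binom5_odd n"
    "binom5_odd (Suc n) = binom5_odd n + binom5_even n"
    unfolding binom5_even_def binom5_odd_def pascal
    by (simp_all add: distrib_left sum.distrib sum_distrib_left ac_simps)
qed

lemma double_binom5_odd: "2 * binom5_odd n = 2 ^ n * fib n"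
proof (induction n rule: fib.induct)
  case (3 n)
  have "binom5_odd (Suc (Suc n)) = 2 * binom5_odd (Suc n) + 4 * binom5_odd n"
    by (simp add: binom5_Suc)
  with 3 show ?case by (simp add: algebra_simps)
qed (simp_all add: binom5_odd_def)

lemma binom5_even_prime_cong:
  assumes "prime r" "odd r"
  shows "[binom5_even r = 1] (mod r)"
  using sum_choose_prime_cong[OF assms(1), of "\<lambda>k. if even k then 5 ^ (k div 2) else 0"] assms(2)
  by (simp add: binom5_even_def)

lemma binom5_odd_prime_cong:
  assumes "prime r" "odd r"
  shows "[binom5_odd r = 5 ^ ((r - 1) div 2)] (mod r)"
proof -
  have "(r - 1) div 2 = r div 2" using assms(2) by (auto elim: oddE)
  then show ?thesis
    using sum_choose_prime_cong[OF assms(1), of "\<lambda>k. if odd k then 5 ^ (k div 2) else 0"] assms(2)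
    by (simp add: binom5_odd_def)
qed

lemma fib_prime_cong:
  assumes "prime r" "odd r"
  shows "[fib r = 5 ^ ((r - 1) div 2)] (mod r)"
    and "[2 * fib (Suc r) = 5 ^ ((r - 1) div 2) + 1] (mod r)"
proof -
  have "\<not> r dvd 2" using assms prime_ge_2_nat[of r] by (auto dest: dvd_imp_le)
  then have fermat: "[2 ^ (r - 1) = 1] (mod r)" by (rule fermat_theorem[OF assms(1)])
  obtain s where r: "r = Suc s" using prime_gt_0_nat[OF assms(1)] gr0_conv_Suc by blast
  have "binom5_odd r = 2 ^ (r - 1) * fib r"
    using double_binom5_odd[of r] by (simp add: r)
  also have "[\<dots> = 1 * fib r] (mod r)" by (intro cong_mult fermat cong_refl)
  finally have "[fib r = binom5_odd r] (mod r)" by (simp add: cong_sym_eq)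
  then show "[fib r = 5 ^ ((r - 1) div 2)] (mod r)"
    using binom5_odd_prime_cong[OF assms] by (rule cong_trans)
  have "binom5_odd r + binom5_even r = binom5_odd (Suc r)" by (rule binom5_Suc(2)[symmetric])
  also have "\<dots> = 2 * 2 ^ (r - 1) * fib (Suc r)"
    using double_binom5_odd[of "Suc r"] by (simp add: r)
  also have "[\<dots> = 2 * 1 * fib (Suc r)] (mod r)" by (intro cong_mult fermat cong_refl)
  finally have "[2 * fib (Suc r) = binom5_odd r + binom5_even r] (mod r)"
    by (simp add: cong_sym_eq)
  then show "[2 * fib (Suc r) = 5 ^ ((r - 1) div 2) + 1] (mod r)"
    using cong_add[OF binom5_odd_prime_cong[OF assms] binom5_even_prime_cong[OF assms]]
    by (rule cong_trans)
qed

lemma QuadRes_5_iff: "QuadRes 5 a \<longleftrightarrow> a mod 5 \<in> {0, 1, 4}"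
proof
  assume "QuadRes 5 a"
  then obtain y where y: "[y^2 = a] (mod 5)" unfolding QuadRes_def by blast
  have "y mod 5 \<in> {0, 1, 2, 3, 4}" by auto
  then have "(y mod 5)^2 mod 5 \<in> {0, 1, 4}" by auto
  then show "a mod 5 \<in> {0, 1, 4}" using y by (simp add: cong_def power_mod)
next
  assume "a mod 5 \<in> {0, 1, 4}"
  then have "[0^2 = a] (mod 5) \<or> [1^2 = a] (mod 5) \<or> [2^2 = a] (mod 5)"
    unfolding cong_def by auto
  then show "QuadRes 5 a" unfolding QuadRes_def by blast
qed

lemma Legendre_5:
  assumes "prime r" "odd r" "r \<noteq> 5"
  shows "Legendre 5 (int r) = (if r mod 5 \<in> {1, 4} then 1 else -1)"
proof -
  have "2 < r" using prime_ge_2_nat[OF assms(1)] assms(2) by (cases "r = 2") auto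
  then have reciprocity: "Legendre (int 5) (int r) * Legendre (int r) (int 5) = 1"
    using Quadratic_Reciprocity[of 5 r] assms by simp
  have "r mod 5 \<noteq> 0"
    using assms primes_dvd_imp_eq[of 5 r] by (auto simp: dvd_eq_mod_eq_0)
  moreover have "int r mod 5 = int (r mod 5)" by (simp add: zmod_int)
  ultimately have "Legendre (int r) 5 = (if r mod 5 \<in> {1, 4} then 1 else -1)"
    unfolding Legendre_def QuadRes_5_iff cong_def by auto
  with reciprocity show ?thesis by (auto simp: zmult_eq_1_iff split: if_splits)
qed

lemma fib_prime_Legendre_cong:
  assumes "prime r" "odd r"
  shows "[int (fib r) = Legendre 5 (int r)] (mod int r)"
    and "[2 * int (fib (Suc r)) = Legendre 5 (int r) + 1] (mod int r)"
proof -
  have "2 < r" using prime_ge_2_nat[OF assms(1)] assms(2) by (cases "r = 2") auto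
  have "[Legendre 5 (int r) = 5 ^ ((r - 1) div 2)] (mod int r)"
    using euler_criterion assms(1) \<open>2 < r\<close> by blast
  note euler = cong_sym[OF this]
  have "[int (fib r) = int (5 ^ ((r - 1) div 2))] (mod int r)"
    using fib_prime_cong(1)[OF assms] cong_int_iff by blast
  then have "[int (fib r) = 5 ^ ((r - 1) div 2)] (mod int r)" by simp
  then show "[int (fib r) = Legendre 5 (int r)] (mod int r)"
    using euler by (rule cong_trans)
  have "[int (2 * fib (Suc r)) = int (5 ^ ((r - 1) div 2) + 1)] (mod int r)"
    using fib_prime_cong(2)[OF assms] cong_int_iff by blast
  then have "[2 * int (fib (Suc r)) = 5 ^ ((r - 1) div 2) + 1] (mod int r)"
    by (simp add: add.commute)
  then show "[2 * int (fib (Suc r)) = Legendre 5 (int r) + 1] (mod int r)"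
    using cong_add[OF euler cong_refl] by (rule cong_trans)
qed

lemma fib_prime_cong_1_4:
  assumes "prime r" "r mod 5 \<in> {1, 4}"
  shows "[fib (r - 1) = 0] (mod r)" and "[fib r = 1] (mod r)"
proof -
  have "r \<noteq> 2" "r \<noteq> 5" using assms(2) by auto
  then have "odd r" using prime_odd_nat[OF assms(1)] prime_ge_2_nat[OF assms(1)] by simp
  with \<open>r \<noteq> 5\<close> have "Legendre 5 (int r) = 1" using Legendre_5 assms by auto
  then have "[int (fib r) = int 1] (mod int r)"
    and "[int (2 * fib (Suc r)) = int (2 * 1)] (mod int r)"
    using fib_prime_Legendre_cong[OF assms(1) \<open>odd r\<close>] by simp_all
  then have fib_r: "[fib r = 1] (mod r)" and "[2 * fib (Suc r) = 2 * 1] (mod r)"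
    by (simp_all only: cong_int_iff)
  moreover have "coprime 2 r" using \<open>odd r\<close> by simp
  ultimately have fib_Suc_r: "[fib (Suc r) = 1] (mod r)" using cong_mult_lcancel_nat by blast
  have "[1 + fib (r - 1) = fib r + fib (r - 1)] (mod r)"
    using cong_add[OF cong_sym[OF fib_r] cong_refl] .
  also have "fib r + fib (r - 1) = fib (Suc r)"
    using prime_gt_0_nat[OF assms(1)] by (cases r) auto
  also note fib_Suc_r
  finally show "[fib (r - 1) = 0] (mod r)" using cong_add_lcancel_0_nat by blast
  show "[fib r = 1] (mod r)" by (fact fib_r)
qed

lemma fib_prime_cong_2_3:
  assumes "prime r" "odd r" "r mod 5 \<in> {2, 3}"
  shows "[fib (Suc r) = 0] (mod r)" and "[int (fib r) = -1] (mod int r)"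
proof -
  have "r \<noteq> 5" using assms(3) by auto
  then have "Legendre 5 (int r) = -1" using Legendre_5[OF assms(1,2)] assms(3) by auto
  then show "[int (fib r) = -1] (mod int r)"
    using fib_prime_Legendre_cong(1)[OF assms(1,2)] by simp
  have "[int (2 * fib (Suc r)) = int (2 * 0)] (mod int r)"
    using fib_prime_Legendre_cong(2)[OF assms(1,2)] \<open>Legendre 5 (int r) = -1\<close> by simp
  then have "[2 * fib (Suc r) = 2 * 0] (mod r)" by (simp only: cong_int_iff)
  moreover have "coprime 2 r" using assms(2) by simp
  ultimately show "[fib (Suc r) = 0] (mod r)" using cong_mult_lcancel_nat by blast
qed

lemma fib_rank_dvd_iff:
  assumes "0 < m" "p dvd fib m"
  shows "p dvd fib n \<longleftrightarrow> fib_rank p dvd n"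
proof -
  define z where "z = fib_rank p"
  have "0 < z \<and> p dvd fib z"
    unfolding z_def fib_rank_def by (rule LeastI[of _ m]) (use assms in auto)
  then have z: "0 < z" "p dvd fib z" by auto
  show ?thesis
  proof
    assume "p dvd fib n"
    then have "p dvd fib (gcd z n)" using z(2) by (simp add: fib_gcd)
    moreover have "0 < gcd z n" using z(1) by simp
    ultimately have "z \<le> gcd z n" unfolding z_def fib_rank_def by (intro Least_le) auto
    then have "gcd z n = z" using z(1) by (simp add: order_antisym)
    then show "fib_rank p dvd n" by (metis gcd_dvd2 z_def)
  next
    assume "fib_rank p dvd n"
    then have "fib z dvd fib n" by (metis fib_gcd gcd_dvd2 gcd_nat.absorb1 z_def)
    then show "p dvd fib n" using z(2) by (rule dvd_trans[rotated])
  qed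
qed

lemma Least_period_dvd:
  fixes f :: "nat \<Rightarrow> 'a"
  assumes "0 < n" "\<And>k. f (k + n) = f k"
  shows "(LEAST d. 0 < d \<and> (\<forall>k. f (k + d) = f k)) dvd n"
proof -
  define d where "d = (LEAST d. 0 < d \<and> (\<forall>k. f (k + d) = f k))"
  have "0 < d \<and> (\<forall>k. f (k + d) = f k)"
    unfolding d_def by (rule LeastI[of _ n]) (use assms in auto)
  then have d: "0 < d" "\<And>k. f (k + d) = f k" by auto
  have multiple: "f (k + j * d) = f k" for k j
  proof (induction j)
    case (Suc j)
    have "f (k + Suc j * d) = f (k + j * d + d)" by (simp add: algebra_simps)
    also have "\<dots> = f (k + j * d)" by (rule d(2))
    finally show ?case using Suc by simp
  qed simp
  have "f (k + n mod d) = f k" for k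
    using multiple[of "k + n mod d" "n div d"] assms(2)[of k] by (simp add: add.assoc)
  have "n mod d = 0"
  proof (rule ccontr)
    assume "n mod d \<noteq> 0"
    with \<open>\<And>k. f (k + n mod d) = f k\<close> have "d \<le> n mod d"
      unfolding d_def by (intro Least_le) auto
    with d(1) show False using mod_less_divisor[of d n] by linarith
  qed
  then show ?thesis unfolding d_def[symmetric] by auto
qed

lemma pisano_dvdI:
  assumes "0 < n" "[fib n = 0] (mod m)" "[fib (Suc n) = 1] (mod m)"
  shows "pisano m dvd n"
  unfolding pisano_def
proof (rule Least_period_dvd[OF assms(1)])
  fix k
  show "fib (k + n) mod m = fib k mod m"
  proof (cases k)
    case (Suc j)
    have "[fib (Suc n) * fib (Suc j) + fib n * fib j = 1 * fib (Suc j) + 0 * fib j] (mod m)"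
      using assms(2,3) by (intro cong_add cong_mult cong_refl)
    then show ?thesis using fib_add[of j n] Suc by (simp add: cong_def)
  qed (use assms(2) in \<open>simp add: cong_def\<close>)
qed

lemma fib_double_cong:
  assumes "[fib n = 0] (mod m)"
  shows "[fib (2 * n) = 0] (mod m)" and "[fib (Suc (2 * n)) = fib (Suc n) ^ 2] (mod m)"
proof -
  have "[(fib (n - 1) + fib (n + 1)) * fib n = (fib (n - 1) + fib (n + 1)) * 0] (mod m)"
    using assms by (intro cong_mult cong_refl)
  then show "[fib (2 * n) = 0] (mod m)" by (simp add: fib_rec_even)
  have "[fib (Suc n) * fib (Suc n) + fib n * fib n = fib (Suc n) * fib (Suc n) + 0 * 0] (mod m)"
    using assms by (intro cong_add cong_mult cong_refl)
  then show "[fib (Suc (2 * n)) = fib (Suc n) ^ 2] (mod m)"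
    using fib_add[of n n] by (simp add: mult_2 power2_eq_square)
qed

lemma pisano_prime_dvd_pred:
  assumes "prime r" "r mod 5 \<in> {1, 4}"
  shows "pisano r dvd r - 1"
  using fib_prime_cong_1_4[OF assms] prime_gt_1_nat[OF assms(1)]
  by (intro pisano_dvdI) simp_all

lemma pisano_prime_dvd_double_Suc:
  assumes "prime r" "odd r" "r mod 5 \<in> {2, 3}"
  shows "pisano r dvd 2 * (r + 1)"
proof (rule pisano_dvdI)
  have zero: "[fib (Suc r) = 0] (mod r)" and minus_one: "[int (fib r) = -1] (mod int r)"
    using fib_prime_cong_2_3[OF assms] by auto
  show "[fib (2 * (r + 1)) = 0] (mod r)" using fib_double_cong(1)[OF zero] by simp
  have "[int (fib (Suc r)) + int (fib r) = 0 + -1] (mod int r)"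
    using zero minus_one by (intro cong_add) (simp_all flip: cong_int_iff)
  then have "[int (fib (Suc (Suc r))) ^ 2 = (-1) ^ 2] (mod int r)" by (intro cong_pow) simp
  then have "[fib (Suc (Suc r)) ^ 2 = 1] (mod r)" by (simp flip: cong_int_iff)
  then show "[fib (Suc (2 * (r + 1))) = 1] (mod r)"
    using cong_trans[OF fib_double_cong(2)[OF zero]] by simp
qed simp

lemma not_QuadRes_minus_one:
  assumes "prime p" "p mod 4 = 3"
  shows "\<not> QuadRes (int p) (-1)"
proof
  assume "QuadRes (int p) (-1)"
  moreover have "2 < p" using assms prime_ge_2_nat[OF assms(1)] by presburger
  then have "\<not> [-1 = 0] (mod int p)" by (simp add: cong_0_iff)
  ultimately have "Legendre (-1) (int p) = 1" by (simp add: Legendre_def)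
  moreover have "odd ((p - 1) div 2)" using assms(2) by presburger
  ultimately have "[1 = -1] (mod int p)"
    using euler_criterion[OF assms(1) \<open>2 < p\<close>, of "-1"] by simp
  then have "int p dvd 2" by (simp add: cong_iff_dvd_diff)
  with \<open>2 < p\<close> show False by (auto dest: zdvd_imp_le)
qed

lemma fib_rank_not_dvd_half_Suc:
  assumes "prime p" "p mod 4 = 3" "p mod 5 \<in> {2, 3}"
  shows "\<not> fib_rank p dvd (p + 1) div 2"
proof
  assume rank_dvd: "fib_rank p dvd (p + 1) div 2"
  define g where "g = (p - 1) div 2"
  have "odd p" using assms(2) by presburger
  then have p: "p = Suc (g + g)" and half: "(p + 1) div 2 = Suc g"
    by (simp_all add: g_def) presburger+
  have zero: "[fib (Suc p) = 0] (mod p)" and minus_one: "[int (fib p) = -1] (mod int p)"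
    using fib_prime_cong_2_3[OF assms(1) \<open>odd p\<close> assms(3)] by auto
  have "p dvd fib (Suc g)"
    using fib_rank_dvd_iff[of "Suc p" p] zero rank_dvd half by (simp add: cong_0_iff)
  then have "[0 = int (fib (Suc g))] (mod int p)" by (simp add: cong_0_iff cong_sym)
  then have "[int (fib g) ^ 2 = int (fib (Suc g)) ^ 2 + int (fib g) ^ 2] (mod int p)"
    using cong_add[OF cong_pow[of 0 _ _ 2] cong_refl[of "int (fib g) ^ 2"]] by simp
  also have "int (fib (Suc g)) ^ 2 + int (fib g) ^ 2 = int (fib p)"
    using fib_add[of g g] by (subst p) (simp add: power2_eq_square)
  also have "[\<dots> = -1] (mod int p)" by (rule minus_one)
  finally have "[int (fib g) ^ 2 = -1] (mod int p)" .
  then have "QuadRes (int p) (-1)" unfolding QuadRes_def by blast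
  then show False using not_QuadRes_minus_one assms(1,2) by blast
qed

lemma sophie_germain_fib_rank_not_dvd_pisano:
  assumes "prime q" "prime (2 * q + 1)" "q mod 5 \<in> {1, 4}"
  shows "\<not> fib_rank (2 * q + 1) dvd pisano q"
proof
  let ?p = "2 * q + 1"
  assume "fib_rank ?p dvd pisano q"
  then have rank_dvd: "fib_rank ?p dvd q - 1"
    using pisano_prime_dvd_pred[OF assms(1,3)] by (rule dvd_trans)
  have "2 \<le> q" using prime_ge_2_nat assms(1) by blast
  have "odd ?p" by simp
  obtain m where m: "0 < m" "?p dvd fib m" and "m = 2 * (q - 1) + 4 \<or> m = 2 * (q - 1) + 2"
  proof (cases "q mod 5 = 1")
    case True
    then have "?p mod 5 = 3" by presburger
    then have "?p dvd fib (Suc ?p)"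
      using fib_prime_cong_2_3[OF assms(2) \<open>odd ?p\<close>] by (simp add: cong_0_iff)
    then show thesis using \<open>2 \<le> q\<close> by (intro that[of "Suc ?p"]) auto
  next
    case False
    then have "q mod 5 = 4" using assms(3) by simp
    then have "?p mod 5 = 4" by presburger
    then have "?p dvd fib (?p - 1)"
      using fib_prime_cong_1_4[OF assms(2)] by (simp add: cong_0_iff)
    then show thesis using \<open>2 \<le> q\<close> by (intro that[of "?p - 1"]) auto
  qed
  moreover have "fib_rank ?p dvd m" using fib_rank_dvd_iff[OF m] m(2) by blast
  moreover have "fib_rank ?p dvd 2 * (q - 1)" using rank_dvd by simp
  note cancel = dvd_add_right_iff[OF this]
  ultimately have "fib_rank ?p dvd 4 \<or> fib_rank ?p dvd 2"
    using cancel[of 4] cancel[of 2] by (simp only:) blast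
  then have "fib_rank ?p dvd 4" using dvd_trans[of "fib_rank ?p" 2 4] by auto
  then have "?p dvd fib 4" using fib_rank_dvd_iff[OF m] by blast
  moreover have "fib 4 = 3" by (simp add: numeral_eq_Suc)
  ultimately show False using \<open>2 \<le> q\<close> by (auto dest: dvd_imp_le)
qed

lemma odd_div_if_dvd_double:
  fixes a b c :: nat
  assumes "b dvd a" "a dvd 2 * c" "\<not> b dvd c"
  shows "odd (a div b)"
proof
  assume "even (a div b)"
  then obtain j where "a div b = 2 * j" by blast
  then have "b * j * 2 dvd c * 2"
    using dvd_mult_div_cancel[OF assms(1)] assms(2) by (simp add: ac_simps)
  then have "b * j dvd c" by simp
  then show False using assms(3) dvd_mult_left by blast
qed

theorem theorem6p2:
  fixes q p :: nat
  assumes "prime q" and "prime (2 * q + 1)" and "q > 5"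
    and "p = 2 * q + 1"
    and "fib_rank p dvd pisano q"
  shows "odd (pisano q div fib_rank p)"
proof -
  have "q mod 5 = 3"
  proof -
    have "q mod 5 \<notin> {1, 4}"
      using sophie_germain_fib_rank_not_dvd_pisano[OF assms(1,2)] assms(4,5) by blast
    moreover have "q mod 5 \<noteq> 0"
      using assms(1,3) primes_dvd_imp_eq[of 5 q] by (auto simp: dvd_eq_mod_eq_0)
    moreover have "\<not> 5 dvd p" using assms(2,3,4) primes_dvd_imp_eq[of 5 p] by auto
    then have "q mod 5 \<noteq> 2" using assms(4) by presburger
    ultimately show ?thesis by auto
  qed
  have "odd q" using prime_odd_nat[OF assms(1)] assms(3) by simp
  have "p mod 4 = 3" "p mod 5 = 2" "(p + 1) div 2 = q + 1"
    using assms(4) \<open>odd q\<close> \<open>q mod 5 = 3\<close> by presburger+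
  then have "\<not> fib_rank p dvd q + 1"
    using fib_rank_not_dvd_half_Suc[of p] assms(2,4) by simp
  moreover have "pisano q dvd 2 * (q + 1)"
    using pisano_prime_dvd_double_Suc[OF assms(1) \<open>odd q\<close>] \<open>q mod 5 = 3\<close> by simp
  ultimately show ?thesis using odd_div_if_dvd_double[OF assms(5)] by blast
qed

end
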